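(* Let $G$ be a finite group of full exponent. Then the co-prime graph $\Gamma_{CP}(G)$ is minimally edge connected if and only if $G$ is a $p$-group for some prime $p$.
   Context: The co-prime graph $\Gamma_{CP}(G)$ of a finite group $G$ is the simple undirected graph with vertex set $G$ in which two distinct elements $x,y$ are adjacent if and only if $\gcd(o(x),o(y))=1$. $G$ is of full exponent if it contains an element whose order equals the exponent of $G$. A $p$-group is a group of order $p^n$ for a prime $p$. For a connected graph $\Gamma$, an edge cut-set is a set $S$ of edges such that $\Gamma-S$ is disconnected or has just one vertex, and the edge connectivity $\kappa'(\Gamma)$ is the smallest size of an edge cut-set. $\Gamma$ is minimally edge connected if $\kappa'(\Gamma-\epsilon)=\kappa'(\Gamma)-1$ for every edge $\epsilon$ of $\Gamma$. *)

theory Defs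
  imports "HOL-Algebra.Multiplicative_Group" "HOL-Computational_Algebra.Primes"
begin

text \<open>Simple undirected graphs given by a vertex set V and a set E of
  2-element subsets of V (edges).\<close>

definition graph_connected :: "'a set \<Rightarrow> 'a set set \<Rightarrow> bool" where
  "graph_connected V E \<longleftrightarrow> V \<noteq> {} \<and>
     (\<forall>x\<in>V. \<forall>y\<in>V. (\<lambda>u v. {u, v} \<in> E)\<^sup>*\<^sup>* x y)"

definition edge_cut_set :: "'a set \<Rightarrow> 'a set set \<Rightarrow> 'a set set \<Rightarrow> bool" where
  "edge_cut_set V E S \<longleftrightarrow> S \<subseteq> E \<and>
     (\<not> graph_connected V (E - S) \<or> card V = 1)"

definition edge_connectivity :: "'a set \<Rightarrow> 'a set set \<Rightarrow> nat" where
  "edge_connectivity V E = (LEAST k. \<exists>S. edge_cut_set V E S \<and> card S = k)"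

definition minimally_edge_connected :: "'a set \<Rightarrow> 'a set set \<Rightarrow> bool" where
  "minimally_edge_connected V E \<longleftrightarrow>
     (\<forall>e\<in>E. edge_connectivity V (E - {e}) = edge_connectivity V E - 1)"

definition coprime_graph_edges :: "('a, 'b) monoid_scheme \<Rightarrow> 'a set set" where
  "coprime_graph_edges G = {{x, y} | x y. x \<in> carrier G \<and> y \<in> carrier G \<and> x \<noteq> y \<and>
       gcd (group.ord G x) (group.ord G y) = 1}"

definition group_exponent :: "('a, 'b) monoid_scheme \<Rightarrow> nat" where
  "group_exponent G = Lcm (group.ord G ` carrier G)"

definition full_exponent :: "('a, 'b) monoid_scheme \<Rightarrow> bool" where
  "full_exponent G \<longleftrightarrow> (\<exists>x\<in>carrier G. group.ord G x = group_exponent G)"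

definition p_group :: "('a, 'b) monoid_scheme \<Rightarrow> nat \<Rightarrow> bool" where
  "p_group G p \<longleftrightarrow> prime p \<and> (\<exists>n. order G = p ^ n)"

end

theory Submission
  imports Defs "HOL-Algebra.Sylow"
begin

text \<open>In the co-prime graph the identity is adjacent to every other element, so the graph is
  connected, and an edge avoiding the identity can be removed without disconnecting it. An element
  \<open>w \<noteq> \<one>\<close> all of whose co-prime partners are trivial hangs on the single edge \<open>{\<one>, w}\<close>,
  which is therefore a bridge. In a \<open>p\<close>-group every non-trivial element is of this kind, so every
  edge is a bridge and the graph is minimally edge connected. Otherwise two distinct primes
  divide \<open>|G|\<close>, and elements of these prime orders span an edge avoiding the identity, while an
  element whose order is the exponent gives a bridge. So the edge connectivity is \<open>1\<close>, yet it
  stays \<open>1\<close> after removing the former edge.\<close>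

definition bridge :: "'a set \<Rightarrow> 'a set set \<Rightarrow> 'a set \<Rightarrow> bool" where
  "bridge V E e \<longleftrightarrow> e \<in> E \<and> \<not> graph_connected V (E - {e})"

lemma not_graph_connected_if_isolated:
  assumes "x \<in> V" "y \<in> V" "x \<noteq> y" "\<And>z. {x, z} \<notin> E"
  shows "\<not> graph_connected V E"
proof
  assume "graph_connected V E"
  then have "(\<lambda>u v. {u, v} \<in> E)\<^sup>*\<^sup>* x y"
    using assms unfolding graph_connected_def by blast
  then show False
    by (cases rule: converse_rtranclpE) (use assms in auto)
qed

lemma graph_connected_if_star:
  assumes "c \<in> V" "\<And>v. v \<in> V \<Longrightarrow> v \<noteq> c \<Longrightarrow> {c, v} \<in> E"
  shows "graph_connected V E"
proof -
  let ?adj = "\<lambda>u v. {u, v} \<in> E"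
  have "?adj\<^sup>*\<^sup>* c v \<and> ?adj\<^sup>*\<^sup>* v c" if "v \<in> V" for v
  proof (cases "v = c")
    case False
    then have "{c, v} \<in> E"
      using assms that by blast
    then show ?thesis
      by (simp add: insert_commute r_into_rtranclp)
  qed simp
  then show ?thesis
    unfolding graph_connected_def using assms(1) by (meson rtranclp_trans equals0D)
qed

lemma edge_connectivity_le_card:
  assumes "edge_cut_set V E S"
  shows "edge_connectivity V E \<le> card S"
  unfolding edge_connectivity_def by (rule Least_le) (use assms in blast)

lemma edge_connectivity_eq_0_if_not_connected:
  assumes "\<not> graph_connected V E"
  shows "edge_connectivity V E = 0"
  unfolding edge_connectivity_def
  by (rule Least_eq_0) (rule exI[of _ "{}"], simp add: edge_cut_set_def assms)

lemma edge_connectivity_pos: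
  assumes "graph_connected V E" "finite E" "x \<in> V" "y \<in> V" "x \<noteq> y"
  shows "edge_connectivity V E > 0"
proof -
  have "card V \<noteq> 1"
    using assms(3-5) by (metis card_1_singletonE singletonD)
  have "\<not> graph_connected V (E - E)"
    by (rule not_graph_connected_if_isolated[OF assms(3-5)]) simp
  then have "edge_cut_set V E E"
    by (simp add: edge_cut_set_def)
  then have "\<exists>S. edge_cut_set V E S \<and> card S = card E"
    by blast
  then have "\<exists>S. edge_cut_set V E S \<and> card S = edge_connectivity V E"
    unfolding edge_connectivity_def by (rule LeastI_ex[OF exI])
  then obtain S where S: "edge_cut_set V E S" "card S = edge_connectivity V E"
    by blast
  have "S \<noteq> {}"
    using S(1) assms(1) \<open>card V \<noteq> 1\<close> by (auto simp: edge_cut_set_def)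
  moreover have "finite S"
    using S(1) assms(2) finite_subset by (auto simp: edge_cut_set_def)
  ultimately show ?thesis
    using S(2) by auto
qed

lemma edge_connectivity_le_1_if_bridge:
  assumes "bridge V E e"
  shows "edge_connectivity V E \<le> 1"
proof -
  have "edge_cut_set V E {e}"
    using assms by (simp add: bridge_def edge_cut_set_def)
  then show ?thesis
    using edge_connectivity_le_card by fastforce
qed

lemma minimally_edge_connected_if_all_bridges:
  assumes "\<And>e. e \<in> E \<Longrightarrow> bridge V E e"
  shows "minimally_edge_connected V E"
  unfolding minimally_edge_connected_def
proof
  fix e assume "e \<in> E"
  then have "bridge V E e" by (rule assms)
  then show "edge_connectivity V (E - {e}) = edge_connectivity V E - 1"
    using edge_connectivity_le_1_if_bridge edge_connectivity_eq_0_if_not_connected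
    by (fastforce simp: bridge_def)
qed

lemma not_minimally_edge_connected_if_bridge_and_nonbridge:
  assumes "finite E" "bridge V E f" "e \<in> E" "graph_connected V (E - {e})"
  shows "\<not> minimally_edge_connected V E"
proof
  assume minimal: "minimally_edge_connected V E"
  obtain x y where xy: "x \<in> V" "y \<in> V" "\<not> (\<lambda>u v. {u, v} \<in> E - {f})\<^sup>*\<^sup>* x y"
    using assms(2,4) by (auto simp: bridge_def graph_connected_def)
  then have "x \<noteq> y" by auto
  then have "edge_connectivity V (E - {e}) > 0"
    using edge_connectivity_pos[OF assms(4) _ xy(1,2)] assms(1) by blast
  moreover have "edge_connectivity V (E - {e}) = edge_connectivity V E - 1"
    using minimal assms(3) by (simp add: minimally_edge_connected_def)
  ultimately show False
    using edge_connectivity_le_1_if_bridge[OF assms(2)] by linarith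
qed

lemma two_prime_divisors_if_not_prime_power:
  fixes n :: nat
  assumes "n \<noteq> 0" "\<And>p k. prime p \<Longrightarrow> n \<noteq> p ^ k"
  obtains p q where "prime p" "prime q" "p \<noteq> q" "p dvd n" "q dvd n"
proof -
  have "n \<noteq> 1"
    using assms(2)[of 2 0] by simp
  then obtain p where p: "prime p" "p dvd n"
    using prime_factor_nat by blast
  obtain m where m: "n = p ^ multiplicity p n * m" "\<not> p dvd m"
    by (rule multiplicity_decompose'[of n p]) (use assms(1) p(1) not_prime_unit in auto)
  have "m \<noteq> 1"
    using assms(2)[OF p(1)] m(1) by auto
  then obtain q where q: "prime q" "q dvd m"
    using prime_factor_nat by blast
  show thesis
  proof
    show "p \<noteq> q" using q(2) m(2) by blast
    show "q dvd n" using q(2) m(1) by (metis dvd_mult)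
  qed (use p q in auto)
qed

lemma (in group) exists_elem_of_prime_order:
  assumes "finite (carrier G)" "prime q" "q dvd order G"
  obtains h where "h \<in> carrier G" "ord h = q"
proof -
  obtain m where "order G = q ^ 1 * m"
    using assms(3) by auto
  then obtain H where H: "subgroup H G" "card H = q"
    using sylow_thm[OF assms(2) is_group _ assms(1)] by (metis power_one_right)
  have "\<not> H \<subseteq> {\<one>}"
    using card_mono[of "{\<one>}" H] H(2) prime_ge_2_nat[OF assms(2)] by auto
  then obtain h where h: "h \<in> H" "h \<noteq> \<one>"
    by blast
  have h_carrier: "h \<in> carrier G"
    using H(1) h(1) subgroup.subset by blast
  interpret H: group "G\<lparr>carrier := H\<rparr>"
    using H(1) subgroup.subgroup_is_group is_group by blast
  have "h [^] q = \<one>"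
    using H.pow_order_eq_1 h(1) H(2) by (simp add: nat_pow_def order_def)
  then have "ord h dvd q"
    using h_carrier pow_eq_id by blast
  moreover have "ord h \<noteq> 1"
    using h_carrier h(2) ord_eq_1 by blast
  ultimately have "ord h = q"
    using assms(2) by (meson prime_nat_iff)
  with h_carrier show thesis by (rule that)
qed

lemma (in group) full_exponentE:
  assumes "full_exponent G"
  obtains x where "x \<in> carrier G" "\<And>z. z \<in> carrier G \<Longrightarrow> ord z dvd ord x"
  using assms unfolding full_exponent_def group_exponent_def by (auto intro: dvd_Lcm)

lemma (in group) coprime_ord_imp_one_if_p_group:
  assumes "p_group G p" "z \<in> carrier G" "w \<in> carrier G" "gcd (ord z) (ord w) = 1"
  shows "z = \<one> \<or> w = \<one>"
proof (rule ccontr)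
  obtain n where p: "prime p" "order G = p ^ n"
    using assms(1) by (auto simp: p_group_def)
  have p_dvd_ord: "p dvd ord v" if v: "v \<in> carrier G" "v \<noteq> \<one>" for v
  proof -
    obtain i where "ord v = p ^ i"
      using ord_dvd_group_order[OF v(1)] p divides_primepow_nat by auto
    moreover have "ord v \<noteq> 1"
      using v ord_eq_1 by blast
    ultimately show ?thesis
      by (cases i) auto
  qed
  assume "\<not> (z = \<one> \<or> w = \<one>)"
  then have "p dvd gcd (ord z) (ord w)"
    using p_dvd_ord assms(2,3) by simp
  then show False
    using assms(4) p(1) by simp
qed

lemma coprime_graph_edgeD:
  assumes "{u, v} \<in> coprime_graph_edges G"
  shows "u \<noteq> v" "u \<in> carrier G" "v \<in> carrier G" "gcd (group.ord G u) (group.ord G v) = 1"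
proof -
  obtain x y where xy: "{u, v} = {x, y}" "x \<noteq> y" "x \<in> carrier G" "y \<in> carrier G"
      "gcd (group.ord G x) (group.ord G y) = 1"
    using assms unfolding coprime_graph_edges_def by auto
  then consider "u = x" "v = y" | "u = y" "v = x"
    by (auto simp: doubleton_eq_iff)
  then show "u \<noteq> v" "u \<in> carrier G" "v \<in> carrier G" "gcd (group.ord G u) (group.ord G v) = 1"
    by (cases; use xy in \<open>simp add: gcd.commute\<close>)+
qed

lemma coprime_graph_edgeI:
  assumes "u \<noteq> v" "u \<in> carrier G" "v \<in> carrier G" "gcd (group.ord G u) (group.ord G v) = 1"
  shows "{u, v} \<in> coprime_graph_edges G"
  unfolding coprime_graph_edges_def using assms by auto

lemma finite_coprime_graph_edges:
  assumes "finite (carrier G)"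
  shows "finite (coprime_graph_edges G)"
proof -
  have "coprime_graph_edges G \<subseteq> Pow (carrier G)"
    unfolding coprime_graph_edges_def by auto
  then show ?thesis
    using assms by (meson finite_Pow_iff finite_subset)
qed

lemma (in group) coprime_graph_edge_one:
  assumes "v \<in> carrier G" "v \<noteq> \<one>"
  shows "{\<one>, v} \<in> coprime_graph_edges G"
  using coprime_graph_edgeI[of \<one> v G] assms by simp

lemma (in group) coprime_graph_connected_without_edge:
  assumes "\<one> \<notin> e"
  shows "graph_connected (carrier G) (coprime_graph_edges G - {e})"
proof (rule graph_connected_if_star[OF one_closed])
  fix v assume "v \<in> carrier G" "v \<noteq> \<one>"
  then show "{\<one>, v} \<in> coprime_graph_edges G - {e}"
    using coprime_graph_edge_one assms by blast
qed

lemma (in group) coprime_graph_bridge: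
  assumes "w \<in> carrier G" "w \<noteq> \<one>"
    and only_trivial_partner: "\<And>z. z \<in> carrier G \<Longrightarrow> gcd (ord w) (ord z) = 1 \<Longrightarrow> z = \<one>"
  shows "bridge (carrier G) (coprime_graph_edges G) {\<one>, w}"
proof -
  have isolated: "{w, z} \<notin> coprime_graph_edges G - {{\<one>, w}}" for z
  proof
    assume "{w, z} \<in> coprime_graph_edges G - {{\<one>, w}}"
    then have edge: "{w, z} \<in> coprime_graph_edges G" and "{w, z} \<noteq> {\<one>, w}"
      by auto
    moreover have "z = \<one>"
      using coprime_graph_edgeD(3,4)[OF edge] by (rule only_trivial_partner)
    ultimately show False
      by (simp add: insert_commute)
  qed
  have "\<not> graph_connected (carrier G) (coprime_graph_edges G - {{\<one>, w}})"
    by (rule not_graph_connected_if_isolated[OF assms(1) one_closed assms(2) isolated])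
  then show ?thesis
    by (simp add: bridge_def coprime_graph_edge_one assms(1,2))
qed

lemma (in group) p_group_coprime_graph_minimally_edge_connected:
  assumes "p_group G p"
  shows "minimally_edge_connected (carrier G) (coprime_graph_edges G)"
proof (rule minimally_edge_connected_if_all_bridges)
  fix e assume "e \<in> coprime_graph_edges G"
  then obtain u v where uv: "e = {u, v}" "u \<noteq> v" "u \<in> carrier G" "v \<in> carrier G"
      "gcd (ord u) (ord v) = 1"
    unfolding coprime_graph_edges_def by auto
  obtain w where w: "e = {\<one>, w}" "w \<in> carrier G" "w \<noteq> \<one>"
    using coprime_ord_imp_one_if_p_group[OF assms uv(3-5)]
  proof
    assume "u = \<one>"
    then show thesis using that[of v] uv by simp
  next
    assume "v = \<one>"
    then show thesis using that[of u] uv by (simp add: insert_commute)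
  qed
  have "z = \<one>" if "z \<in> carrier G" "gcd (ord w) (ord z) = 1" for z
    using coprime_ord_imp_one_if_p_group[OF assms w(2) that] w(3) by blast
  then show "bridge (carrier G) (coprime_graph_edges G) e"
    unfolding w(1) by (rule coprime_graph_bridge[OF w(2,3)])
qed

lemma (in group) p_group_if_coprime_graph_minimally_edge_connected:
  assumes "finite (carrier G)" "full_exponent G"
    and minimal: "minimally_edge_connected (carrier G) (coprime_graph_edges G)"
  shows "\<exists>p. p_group G p"
proof (rule ccontr)
  assume "\<nexists>p. p_group G p"
  then have "order G \<noteq> p ^ k" if "prime p" for p k
    using that by (auto simp: p_group_def)
  moreover have "order G \<noteq> 0"
    using assms(1) order_gt_0_iff_finite by simp
  ultimately obtain p q where pq: "prime p" "prime q" "p \<noteq> q" "p dvd order G" "q dvd order G"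
    using two_prime_divisors_if_not_prime_power by blast
  obtain a where a: "a \<in> carrier G" "ord a = p"
    by (rule exists_elem_of_prime_order[OF assms(1) pq(1,4)])
  obtain b where b: "b \<in> carrier G" "ord b = q"
    by (rule exists_elem_of_prime_order[OF assms(1) pq(2,5)])
  obtain x where x: "x \<in> carrier G" "\<And>z. z \<in> carrier G \<Longrightarrow> ord z dvd ord x"
    using full_exponentE[OF assms(2)] by blast
  have "a \<noteq> b"
    using a(2) b(2) pq(3) by auto
  moreover have "gcd (ord a) (ord b) = 1"
    using a(2) b(2) primes_coprime[OF pq(1-3)] by (simp add: coprime_iff_gcd_eq_1)
  ultimately have edge: "{a, b} \<in> coprime_graph_edges G"
    by (rule coprime_graph_edgeI[OF _ a(1) b(1)])
  have connected: "graph_connected (carrier G) (coprime_graph_edges G - {{a, b}})"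
  proof (rule coprime_graph_connected_without_edge)
    show "\<one> \<notin> {a, b}"
      using a(2) b(2) pq(1,2) by (auto simp: not_prime_1)
  qed
  have "x \<noteq> \<one>"
    using x(2)[OF a(1)] a(2) pq(1) by (auto simp: not_prime_1)
  moreover have "z = \<one>" if "z \<in> carrier G" "gcd (ord x) (ord z) = 1" for z
    using that x(2) ord_eq_1 by (metis gcd.commute gcd_nat.absorb_iff1)
  ultimately have bridge: "bridge (carrier G) (coprime_graph_edges G) {\<one>, x}"
    by (rule coprime_graph_bridge[OF x(1)])
  show False
    using not_minimally_edge_connected_if_bridge_and_nonbridge[OF
        finite_coprime_graph_edges[OF assms(1)] bridge edge connected] minimal by contradiction
qed

theorem mainTheorem11:
  fixes G :: "('a, 'b) monoid_scheme"
  assumes "group G" and "finite (carrier G)" and "full_exponent G"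
  shows "minimally_edge_connected (carrier G) (coprime_graph_edges G)
           \<longleftrightarrow> (\<exists>p. p_group G p)"
  using group.p_group_if_coprime_graph_minimally_edge_connected[OF assms]
    group.p_group_coprime_graph_minimally_edge_connected[OF assms(1)] by blast

end
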